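(* Let $S[1..n]$ be a string and let $i,j,x,y$ be integers with $1\le i<j\le x\le y\le n$. If $\mathrm{LLR}_j$ does not exist, or exists but does not cover the interval $[x..y]$, then $\mathrm{LLR}_i$ does not exist or does not cover $[x..y]$.
   Context: For $1\le i\le j\le n$, $S[i..j]=S[i]\cdots S[j]$. A substring $S[i..j]$ covers $[x..y]$ if $i\le x\le y\le j$. A substring $S[i..j]$ is unique if there is no other substring $S[i'..j']$ with $S[i'..j']=S[i..j]$ and $i'\ne i$; it is a repeat otherwise. The left-bounded longest repeat starting at position $k$, $\mathrm{LLR}_k$, is a repeat $S[k..j]$ such that either $j=n$ or $S[k..j+1]$ is unique; it does not exist if $S[k]$ (the single character) is unique. *)

theory Defs
  imports Main
begin

(* Strings are lists; positions are 1-based: S[i..j] with 1 <= i <= j <= n = length S. *)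
definition substr :: "'a list \<Rightarrow> nat \<Rightarrow> nat \<Rightarrow> 'a list" where
  "substr S i j = take (Suc j - i) (drop (i - 1) S)"

definition valid_interval :: "'a list \<Rightarrow> nat \<Rightarrow> nat \<Rightarrow> bool" where
  "valid_interval S i j \<longleftrightarrow> 1 \<le> i \<and> i \<le> j \<and> j \<le> length S"

definition is_repeat :: "'a list \<Rightarrow> nat \<Rightarrow> nat \<Rightarrow> bool" where
  "is_repeat S i j \<longleftrightarrow> valid_interval S i j \<and>
     (\<exists>i' j'. valid_interval S i' j' \<and> substr S i' j' = substr S i j \<and> i' \<noteq> i)"

definition is_unique :: "'a list \<Rightarrow> nat \<Rightarrow> nat \<Rightarrow> bool" where
  "is_unique S i j \<longleftrightarrow> valid_interval S i j \<and> \<not> is_repeat S i j"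

definition is_LLR :: "'a list \<Rightarrow> nat \<Rightarrow> nat \<Rightarrow> bool" where
  "is_LLR S k j \<longleftrightarrow> is_repeat S k j \<and> (j = length S \<or> is_unique S k (Suc j))"

definition covers :: "nat \<Rightarrow> nat \<Rightarrow> nat \<Rightarrow> nat \<Rightarrow> bool" where
  "covers i j x y \<longleftrightarrow> i \<le> x \<and> x \<le> y \<and> y \<le> j"

definition LLR_covers :: "'a list \<Rightarrow> nat \<Rightarrow> nat \<Rightarrow> nat \<Rightarrow> bool" where
  "LLR_covers S k x y \<longleftrightarrow> (\<exists>j. is_LLR S k j \<and> covers k j x y)"

end

theory Submission
  imports Defs
begin

text \<open>A repeat S[i..e] has a second occurrence S[i'..j']; dropping the first j - i characters of both
  occurrences shows that every suffix S[j..e] is a repeat as well. Hence if LLR_i covers [x..y], then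
  S[j..e] is a repeat reaching y, and the longest repeat starting at j, which is LLR_j, reaches at
  least as far and so covers [x..y] too.\<close>

lemma length_substr:
  assumes "valid_interval S a b"
  shows "length (substr S a b) = Suc b - a"
  using assms by (auto simp: substr_def valid_interval_def)

lemma substr_add_left:
  assumes "1 \<le> a"
  shows "substr S (a + d) b = drop d (substr S a b)"
  using assms by (simp add: substr_def drop_take add.commute diff_diff_left)

lemma is_repeat_suffix:
  assumes "is_repeat S i e" "i \<le> j" "j \<le> e"
  shows "is_repeat S j e"
proof -
  obtain i' j' where v': "valid_interval S i' j'" and occ: "substr S i' j' = substr S i e"
    and "i' \<noteq> i"
    using assms(1) unfolding is_repeat_def by blast
  have v: "valid_interval S i e" using assms(1) unfolding is_repeat_def by blast
  define d where "d = j - i"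
  have j: "j = i + d" using assms(2) by (simp add: d_def)
  have "Suc j' - i' = Suc e - i"
    using length_substr[OF v'] length_substr[OF v] occ by simp
  then have "valid_interval S (i' + d) j'" "valid_interval S j e"
    using v v' assms(2,3) unfolding valid_interval_def d_def by auto
  moreover have "substr S (i' + d) j' = substr S j e"
    using substr_add_left[of i' S d j'] substr_add_left[of i S d e] occ v v' j
    unfolding valid_interval_def by simp
  moreover have "i' + d \<noteq> j" using \<open>i' \<noteq> i\<close> j by simp
  ultimately show ?thesis unfolding is_repeat_def by blast
qed

lemma is_repeat_le_length: "is_repeat S k e \<Longrightarrow> e \<le> length S"
  unfolding is_repeat_def valid_interval_def by blast

lemma is_LLR_Greatest:
  assumes "is_repeat S k e"
  shows "is_LLR S k (GREATEST e'. is_repeat S k e')"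
    and "e \<le> (GREATEST e'. is_repeat S k e')"
proof -
  define m where "m = (GREATEST e'. is_repeat S k e')"
  have bound: "\<forall>e'. is_repeat S k e' \<longrightarrow> e' \<le> length S"
    using is_repeat_le_length by blast
  have m: "is_repeat S k m"
    unfolding m_def by (rule GreatestI_nat[where P="is_repeat S k", OF assms]) (use bound in blast)
  have maximal: "e' \<le> m" if "is_repeat S k e'" for e'
    unfolding m_def by (rule Greatest_le_nat[where P="is_repeat S k", OF that]) (use bound in blast)
  show "e \<le> (GREATEST e'. is_repeat S k e')"
    using maximal[OF assms] by (simp add: m_def)
  have "is_unique S k (Suc m)" if "m \<noteq> length S"
  proof -
    have "valid_interval S k (Suc m)"
      using m that is_repeat_le_length[OF m] unfolding is_repeat_def valid_interval_def by auto
    moreover have "\<not> is_repeat S k (Suc m)" using maximal by fastforce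
    ultimately show ?thesis unfolding is_unique_def by blast
  qed
  with m show "is_LLR S k (GREATEST e'. is_repeat S k e')"
    unfolding is_LLR_def m_def[symmetric] by blast
qed

theorem lemma4:
  fixes S :: "'a list" and i j x y :: nat
  assumes "1 \<le> i" "i < j" "j \<le> x" "x \<le> y" "y \<le> length S"
    and "\<not> LLR_covers S j x y"
  shows "\<not> LLR_covers S i x y"
proof
  assume "LLR_covers S i x y"
  then obtain e where "is_repeat S i e" and cover: "covers i e x y"
    unfolding LLR_covers_def is_LLR_def by blast
  then have "is_repeat S j e"
    using is_repeat_suffix assms(2,3) cover unfolding covers_def by force
  then have "LLR_covers S j x y"
    using is_LLR_Greatest cover assms(3) unfolding LLR_covers_def covers_def by fastforce
  with assms(6) show False ..
qed

end
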